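(* With the matrices defined in the context, the Neumann Schur complement $S_N:=\mathbf{B}\mathbf{A_N}^{-1}\mathbf{B}^T\in\mathbb{R}^{n^2\times n^2}$ satisfies $$S_N=I_{n^2}-\mathbb{1}\mathbb{1}^T,$$ where $\mathbb{1}=h(1,\dots,1)^T\in\mathbb{R}^{n^2}$ (a unit vector). Equivalently, $S_N=\mathbf{B}\mathbf{B}^\dagger$ is the orthogonal projector onto the orthogonal complement of $\operatorname{Ker}\mathbf{B}^T=\operatorname{span}\{\mathbb{1}\}$.
   Context: Fix an integer $n\ge 2$ and set $h=1/n$. Let $I_m$ denote the $m\times m$ identity matrix and $\otimes$ the Kronecker product. Let $\mathrm{B}\in\mathbb{R}^{n\times(n-1)}$ be $\mathrm{B}=\frac1h M$, where $M_{i,i}=1$ and $M_{i+1,i}=-1$ for $1\le i\le n-1$, all other entries $0$. Define $\mathrm{B}^u_x=I_n\otimes \mathrm{B}$, $\mathrm{B}^v_y=\mathrm{B}\otimes I_n$, $\mathrm{B}^q_x=I_{n-1}\otimes\mathrm{B}$, $\mathrm{B}^q_y=\mathrm{B}\otimes I_{n-1}$. Let $\mathbf{B}=\begin{bmatrix}-\mathrm{B}^u_x & -\mathrm{B}^v_y\end{bmatrix}\in\mathbb{R}^{n^2\times 2n(n-1)}$ and $\mathbf{C}=\begin{bmatrix}-(\mathrm{B}^q_y)^T & (\mathrm{B}^q_x)^T\end{bmatrix}\in\mathbb{R}^{(n-1)^2\times 2n(n-1)}$, and let $\mathbf{A_N}=\mathbf{B}^T\mathbf{B}+\mathbf{C}^T\mathbf{C}$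 (which is invertible). The superscript $\dagger$ denotes the Moore–Penrose pseudoinverse. *)

theory Defs
  imports "Jordan_Normal_Form.Matrix"
begin

definition kron :: "real mat \<Rightarrow> real mat \<Rightarrow> real mat" where
  "kron A B = mat (dim_row A * dim_row B) (dim_col A * dim_col B)
     (\<lambda>(r,c). A $$ (r div dim_row B, c div dim_col B) * B $$ (r mod dim_row B, c mod dim_col B))"

definition hcat :: "real mat \<Rightarrow> real mat \<Rightarrow> real mat" where
  "hcat A B = mat (dim_row A) (dim_col A + dim_col B)
     (\<lambda>(i,j). if j < dim_col A then A $$ (i,j) else B $$ (i, j - dim_col A))"

(* B = (1/h) M, h = 1/n, M_{i,i} = 1, M_{i+1,i} = -1 (0-indexed here) *)
definition Bmat :: "nat \<Rightarrow> real mat" where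
  "Bmat n = mat n (n - 1) (\<lambda>(i,j). real n * (if i = j then 1 else if i = j + 1 then -1 else 0))"

definition Bux :: "nat \<Rightarrow> real mat" where "Bux n = kron (1\<^sub>m n) (Bmat n)"
definition Bvy :: "nat \<Rightarrow> real mat" where "Bvy n = kron (Bmat n) (1\<^sub>m n)"
definition Bqx :: "nat \<Rightarrow> real mat" where "Bqx n = kron (1\<^sub>m (n - 1)) (Bmat n)"
definition Bqy :: "nat \<Rightarrow> real mat" where "Bqy n = kron (Bmat n) (1\<^sub>m (n - 1))"

definition bigB :: "nat \<Rightarrow> real mat" where
  "bigB n = hcat (- Bux n) (- Bvy n)"

definition bigC :: "nat \<Rightarrow> real mat" where
  "bigC n = hcat (- (Bqy n)\<^sup>T) ((Bqx n)\<^sup>T)"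

definition AN :: "nat \<Rightarrow> real mat" where
  "AN n = (bigB n)\<^sup>T * bigB n + (bigC n)\<^sup>T * bigC n"

definition onevec :: "nat \<Rightarrow> real mat" where
  "onevec n = mat (n^2) 1 (\<lambda>_. 1 / real n)"

definition is_pinv :: "real mat \<Rightarrow> real mat \<Rightarrow> bool" where
  "is_pinv A X \<longleftrightarrow> X \<in> carrier_mat (dim_col A) (dim_row A) \<and>
     A * X * A = A \<and> X * A * X = X \<and> (A * X)\<^sup>T = A * X \<and> (X * A)\<^sup>T = X * A"

end

theory Submission
  imports Defs "Jordan_Normal_Form.Determinant"
begin

text \<open>Write B, C for bigB n, bigC n (a discrete divergence and the transpose of a discrete
  curl, so that B C^T = 0) and 1 for onevec n. Then (B^T B + C^T C) B^T = B^T (B B^T), so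
  S = B A_N^-1 B^T satisfies S B B^T = B B^T, which over the reals forces S B = B; and S 1 = 0
  because B^T 1 = 0. The Penrose conditions give the same two properties for B B^+. An explicit
  G with B G + 1 1^T = I shows that a matrix is determined by its products with B and with 1,
  so both matrices equal I - 1 1^T. Invertibility of A_N amounts to ker B \<inter> ker C = 0, which
  follows from the commutation (B^u_x)^T B^v_y = B^q_y (B^q_x)^T of the Kronecker factors and
  the injectivity of B^u_x and B^v_y.\<close>

lemma sum_lessThan_add_nat:
  fixes f :: "nat \<Rightarrow> 'a::comm_monoid_add"
  shows "(\<Sum>k<a + b. f k) = (\<Sum>k<a. f k) + (\<Sum>j<b. f (a + j))"
  by (induction b) (simp_all add: add.assoc)

lemma sum_lessThan_mult_nat:
  fixes f :: "nat \<Rightarrow> 'a::comm_monoid_add"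
  shows "(\<Sum>k<a * b. f k) = (\<Sum>i<a. \<Sum>j<b. f (i * b + j))"
proof (induction a)
  case (Suc a)
  have "(\<Sum>k<Suc a * b. f k) = (\<Sum>k<a * b + b. f k)"
    by (simp add: add.commute)
  also have "\<dots> = (\<Sum>k<a * b. f k) + (\<Sum>j<b. f (a * b + j))"
    by (rule sum_lessThan_add_nat)
  finally show ?case
    using Suc by (simp add: add.commute)
qed simp

lemma index_mult_mat_sum:
  "i < dim_row A \<Longrightarrow> j < dim_col B \<Longrightarrow> dim_col A = dim_row B \<Longrightarrow>
   (A * B) $$ (i, j) = (\<Sum>k<dim_row B. A $$ (i, k) * B $$ (k, j))"
  by (simp add: scalar_prod_def atLeast0LessThan)

lemma add_eq_zero_imp_eq_uminus_mat:
  fixes A B :: "'a::group_add mat"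
  assumes "A \<in> carrier_mat r c" "B \<in> carrier_mat r c" "A + B = 0\<^sub>m r c"
  shows "A = - B"
proof (rule eq_matI)
  fix i j assume "i < dim_row (- B)" "j < dim_col (- B)"
  then have "A $$ (i, j) + B $$ (i, j) = 0"
    using assms by (metis index_add_mat(1) index_zero_mat(1) carrier_matD uminus_carrier_iff_mat)
  then show "A $$ (i, j) = (- B) $$ (i, j)"
    using \<open>i < dim_row (- B)\<close> \<open>j < dim_col (- B)\<close> by (simp add: eq_neg_iff_add_eq_0)
qed (use assms in auto)

lemma minus_eq_zero_imp_eq_mat:
  fixes A B :: "'a::group_add mat"
  assumes "A \<in> carrier_mat r c" "B \<in> carrier_mat r c" "A - B = 0\<^sub>m r c"
  shows "A = B"
proof (rule eq_matI)
  fix i j assume "i < dim_row B" "j < dim_col B"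
  then have "A $$ (i, j) - B $$ (i, j) = 0"
    using assms by (metis carrier_matD index_minus_mat(1) index_zero_mat(1))
  then show "A $$ (i, j) = B $$ (i, j)" by simp
qed (use assms in auto)

lemma uminus_mult_uminus_mat:
  fixes A B :: "'a::ring mat"
  shows "A \<in> carrier_mat r m \<Longrightarrow> B \<in> carrier_mat m c \<Longrightarrow> - A * - B = A * B"
  by simp

lemma inverts_mat_carrier:
  assumes A: "A \<in> carrier_mat K K" and "inverts_mat A Ainv" and "inverts_mat Ainv A"
  shows "Ainv \<in> carrier_mat K K \<and> Ainv * A = 1\<^sub>m K"
proof -
  have AAinv: "A * Ainv = 1\<^sub>m K" and AinvA: "Ainv * A = 1\<^sub>m (dim_row Ainv)"
    using assms unfolding inverts_mat_def by auto
  have "dim_col Ainv = K" using arg_cong[OF AAinv, of dim_col] by simp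
  moreover have "dim_row Ainv = K" using arg_cong[OF AinvA, of dim_col] A by simp
  ultimately show ?thesis using AinvA by auto
qed

section \<open>Gram matrices, Schur complements and projectors\<close>

lemma gram_add_eq_zero_imp_zero:
  fixes M N :: "real mat"
  assumes M: "M \<in> carrier_mat r c" and N: "N \<in> carrier_mat r' c"
    and sum0: "M\<^sup>T * M + N\<^sup>T * N = 0\<^sub>m c c"
  shows "M = 0\<^sub>m r c \<and> N = 0\<^sub>m r' c"
proof -
  have col_zero: "(\<forall>i<r. M $$ (i, j) = 0) \<and> (\<forall>i<r'. N $$ (i, j) = 0)" if j: "j < c" for j
  proof -
    have "(\<Sum>i<r. (M $$ (i, j))\<^sup>2) + (\<Sum>i<r'. (N $$ (i, j))\<^sup>2) = (M\<^sup>T * M + N\<^sup>T * N) $$ (j, j)"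
      using M N j by (simp add: index_mult_mat_sum power2_eq_square del: index_mult_mat(1))
    also have "\<dots> = 0" using sum0 j by simp
    finally have "(\<Sum>i<r. (M $$ (i, j))\<^sup>2) = 0 \<and> (\<Sum>i<r'. (N $$ (i, j))\<^sup>2) = 0"
      by (simp add: add_nonneg_eq_0_iff sum_nonneg)
    then show ?thesis by (simp add: sum_nonneg_eq_0_iff)
  qed
  show ?thesis
  proof
    show "M = 0\<^sub>m r c" by (rule eq_matI) (use M col_zero in auto)
    show "N = 0\<^sub>m r' c" by (rule eq_matI) (use N col_zero in auto)
  qed
qed

lemma gram_eq_zero_imp_zero:
  fixes M :: "real mat"
  assumes M: "M \<in> carrier_mat r c" and "M\<^sup>T * M = 0\<^sub>m c c"
  shows "M = 0\<^sub>m r c"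
proof -
  have "(0\<^sub>m 0 c :: real mat)\<^sup>T * 0\<^sub>m 0 c = 0\<^sub>m c c"
    by (rule eq_matI) auto
  then have "M\<^sup>T * M + (0\<^sub>m 0 c)\<^sup>T * 0\<^sub>m 0 c = 0\<^sub>m c c"
    using assms by simp
  then show ?thesis using gram_add_eq_zero_imp_zero[OF M zero_carrier_mat] by blast
qed

lemma mult_gram_eq_zero_imp_mult_eq_zero:
  fixes F B :: "real mat"
  assumes F: "F \<in> carrier_mat r N" and B: "B \<in> carrier_mat N K"
    and FBB: "F * (B * B\<^sup>T) = 0\<^sub>m r N"
  shows "F * B = 0\<^sub>m r K"
proof -
  have "((F * B)\<^sup>T)\<^sup>T * (F * B)\<^sup>T = F * B * (B\<^sup>T * F\<^sup>T)"
    using F B by (simp add: transpose_mult)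
  also have "\<dots> = F * (B * (B\<^sup>T * F\<^sup>T))"
    using F B by (intro assoc_mult_mat[of _ r N _ K _ r]) auto
  also have "B * (B\<^sup>T * F\<^sup>T) = B * B\<^sup>T * F\<^sup>T"
    using F B by (intro assoc_mult_mat[symmetric, of _ N K _ N _ r]) auto
  also have "F * (B * B\<^sup>T * F\<^sup>T) = F * (B * B\<^sup>T) * F\<^sup>T"
    using F B by (intro assoc_mult_mat[symmetric, of _ r N _ N _ r]) auto
  also have "\<dots> = 0\<^sub>m r r" using F FBB by simp
  finally have "(F * B)\<^sup>T = 0\<^sub>m K r"
    using F B by (intro gram_eq_zero_imp_zero[of _ K r]) simp_all
  then have "((F * B)\<^sup>T)\<^sup>T = (0\<^sub>m K r)\<^sup>T" by (rule arg_cong)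
  then show ?thesis by simp
qed

lemma projector_eq_if_fixes_range:
  fixes B G M u :: "real mat"
  assumes B: "B \<in> carrier_mat N K" and G: "G \<in> carrier_mat K N"
    and u: "u \<in> carrier_mat N 1" and M: "M \<in> carrier_mat N N"
    and split: "B * G + u * u\<^sup>T = 1\<^sub>m N"
    and MB: "M * B = B" and Mu: "M * u = 0\<^sub>m N 1"
  shows "M = 1\<^sub>m N - u * u\<^sup>T"
proof -
  have uu: "u * u\<^sup>T \<in> carrier_mat N N" using u by simp
  have BG: "B * G = 1\<^sub>m N - u * u\<^sup>T"
  proof (rule eq_matI)
    fix i j assume ij: "i < dim_row (1\<^sub>m N - u * u\<^sup>T)" "j < dim_col (1\<^sub>m N - u * u\<^sup>T)"
    have "(B * G + u * u\<^sup>T) $$ (i, j) = 1\<^sub>m N $$ (i, j)" using split by simp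
    then show "(B * G) $$ (i, j) = (1\<^sub>m N - u * u\<^sup>T) $$ (i, j)"
      using ij B G u by simp
  qed (use B G u in auto)
  have "M = M * (B * G + u * u\<^sup>T)" using M split by simp
  also have "\<dots> = M * (B * G) + M * (u * u\<^sup>T)"
    using M B G uu by (intro mult_add_distrib_mat[of _ N N]) auto
  also have "M * (B * G) = B * G"
    using assoc_mult_mat[OF M B G] MB by simp
  also have "M * (u * u\<^sup>T) = 0\<^sub>m N N"
    using assoc_mult_mat[OF M u transpose_carrier_mat[THEN iffD2, OF u]] Mu u by simp
  finally show ?thesis
    using BG minus_carrier_mat[OF uu, of "1\<^sub>m N"] by simp
qed

lemma schur_complement_fixes_range:
  fixes B C Ainv :: "real mat"
  assumes B: "B \<in> carrier_mat N K" and C: "C \<in> carrier_mat c K"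
    and Ainv: "Ainv \<in> carrier_mat K K" and inv: "Ainv * (B\<^sup>T * B + C\<^sup>T * C) = 1\<^sub>m K"
    and BC: "B * C\<^sup>T = 0\<^sub>m N c"
  shows "B * Ainv * B\<^sup>T * B = B"
proof -
  define S where "S = B * Ainv * B\<^sup>T"
  have Bt: "B\<^sup>T \<in> carrier_mat K N" and Ct: "C\<^sup>T \<in> carrier_mat K c" using B C by simp_all
  have BBt: "B * B\<^sup>T \<in> carrier_mat N N" using B by simp
  have S: "S \<in> carrier_mat N N" unfolding S_def using B Ainv by simp
  have CBt: "C * B\<^sup>T = 0\<^sub>m c N"
    using arg_cong[OF BC, of transpose_mat] transpose_mult[OF B Ct] by simp
  have "(B\<^sup>T * B + C\<^sup>T * C) * B\<^sup>T = B\<^sup>T * B * B\<^sup>T + C\<^sup>T * C * B\<^sup>T"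
    using B C by (intro add_mult_distrib_mat[of _ K K]) auto
  also have "\<dots> = B\<^sup>T * (B * B\<^sup>T)"
    using assoc_mult_mat[OF Bt B Bt] assoc_mult_mat[OF Ct C Bt] CBt Ct BBt Bt by simp
  finally have ABt: "(B\<^sup>T * B + C\<^sup>T * C) * B\<^sup>T = B\<^sup>T * (B * B\<^sup>T)" .
  have "S * (B * B\<^sup>T) = B * (Ainv * ((B\<^sup>T * B + C\<^sup>T * C) * B\<^sup>T))"
    unfolding S_def ABt
    using assoc_mult_mat[OF mult_carrier_mat[OF B Ainv] Bt BBt]
      assoc_mult_mat[OF B Ainv mult_carrier_mat[OF Bt BBt]] by simp
  also have "\<dots> = B * B\<^sup>T"
    using assoc_mult_mat[OF Ainv _ Bt, of "B\<^sup>T * B + C\<^sup>T * C"] inv B C by simp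
  finally have SBB: "S * (B * B\<^sup>T) = B * B\<^sup>T" .
  have "(S - 1\<^sub>m N) * (B * B\<^sup>T) = S * (B * B\<^sup>T) - 1\<^sub>m N * (B * B\<^sup>T)"
    by (rule minus_mult_distrib_mat[OF S one_carrier_mat BBt])
  also have "\<dots> = 0\<^sub>m N N"
    unfolding SBB left_mult_one_mat[OF BBt] by (rule minus_r_inv_mat[OF BBt])
  finally have "(S - 1\<^sub>m N) * (B * B\<^sup>T) = 0\<^sub>m N N" .
  then have "(S - 1\<^sub>m N) * B = 0\<^sub>m N K"
    by (rule mult_gram_eq_zero_imp_mult_eq_zero[OF minus_carrier_mat[OF one_carrier_mat] B])
  then have "S * B - B = 0\<^sub>m N K"
    unfolding minus_mult_distrib_mat[OF S one_carrier_mat B] left_mult_one_mat[OF B] .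
  then show ?thesis
    unfolding S_def[symmetric] by (rule minus_eq_zero_imp_eq_mat[OF mult_carrier_mat[OF S B] B])
qed

lemma schur_complement_eq_projector:
  fixes B C G Ainv u :: "real mat"
  assumes B: "B \<in> carrier_mat N K" and C: "C \<in> carrier_mat c K"
    and G: "G \<in> carrier_mat K N" and u: "u \<in> carrier_mat N 1"
    and Ainv: "Ainv \<in> carrier_mat K K" and inv: "Ainv * (B\<^sup>T * B + C\<^sup>T * C) = 1\<^sub>m K"
    and BC: "B * C\<^sup>T = 0\<^sub>m N c"
    and split: "B * G + u * u\<^sup>T = 1\<^sub>m N" and Bu: "B\<^sup>T * u = 0\<^sub>m K 1"
  shows "B * Ainv * B\<^sup>T = 1\<^sub>m N - u * u\<^sup>T"
proof (rule projector_eq_if_fixes_range[OF B G u _ split])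
  have BAinv: "B * Ainv \<in> carrier_mat N K" using B Ainv by simp
  then show "B * Ainv * B\<^sup>T \<in> carrier_mat N N" using B by simp
  show "B * Ainv * B\<^sup>T * B = B"
    by (rule schur_complement_fixes_range[OF B C Ainv inv BC])
  show "B * Ainv * B\<^sup>T * u = 0\<^sub>m N 1"
    using assoc_mult_mat[OF BAinv transpose_carrier_mat[THEN iffD2, OF B] u] Bu
      right_mult_zero_mat[OF BAinv] by simp
qed

lemma pinv_eq_projector:
  fixes B G X u :: "real mat"
  assumes B: "B \<in> carrier_mat N K" and G: "G \<in> carrier_mat K N"
    and u: "u \<in> carrier_mat N 1" and X: "is_pinv B X"
    and split: "B * G + u * u\<^sup>T = 1\<^sub>m N" and Bu: "B\<^sup>T * u = 0\<^sub>m K 1"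
  shows "B * X = 1\<^sub>m N - u * u\<^sup>T"
proof (rule projector_eq_if_fixes_range[OF B G u _ split])
  have Xc: "X \<in> carrier_mat K N" and BXB: "B * X * B = B" and sym: "(B * X)\<^sup>T = B * X"
    using X B unfolding is_pinv_def by auto
  show "B * X \<in> carrier_mat N N" using B Xc by simp
  show "B * X * B = B" by (rule BXB)
  have "B * X * u = X\<^sup>T * B\<^sup>T * u"
    using sym transpose_mult[OF B Xc] by simp
  also have "\<dots> = 0\<^sub>m N 1"
    using assoc_mult_mat[OF transpose_carrier_mat[THEN iffD2, OF Xc]
        transpose_carrier_mat[THEN iffD2, OF B] u] Bu Xc by simp
  finally show "B * X * u = 0\<^sub>m N 1" .
qed

text \<open>The cross identity turns |R^T U|^2 into (P U)^T (Q V) = -|P U|^2.\<close>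
lemma block_kernel_trivial:
  fixes P Q R S LP LQ U V :: "real mat"
  assumes P: "P \<in> carrier_mat N a" and Q: "Q \<in> carrier_mat N b"
    and R: "R \<in> carrier_mat a c" and S: "S \<in> carrier_mat b c"
    and LP: "LP \<in> carrier_mat a N" "LP * P = 1\<^sub>m a"
    and LQ: "LQ \<in> carrier_mat b N" "LQ * Q = 1\<^sub>m b"
    and cross: "P\<^sup>T * Q = R * S\<^sup>T"
    and U: "U \<in> carrier_mat a k" and V: "V \<in> carrier_mat b k"
    and eq1: "P * U + Q * V = 0\<^sub>m N k" and eq2: "R\<^sup>T * U = S\<^sup>T * V"
  shows "U = 0\<^sub>m a k \<and> V = 0\<^sub>m b k"
proof -
  have Pt: "P\<^sup>T \<in> carrier_mat a N" and Rt: "R\<^sup>T \<in> carrier_mat c a"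
    and St: "S\<^sup>T \<in> carrier_mat c b" and Ut: "U\<^sup>T \<in> carrier_mat k a"
    using P R S U by simp_all
  have PU: "P * U \<in> carrier_mat N k" and QV: "Q * V \<in> carrier_mat N k"
    and RU: "R\<^sup>T * U \<in> carrier_mat c k" using P Q U V Rt by simp_all
  have PU_eq: "P * U = - (Q * V)" by (rule add_eq_zero_imp_eq_uminus_mat[OF PU QV eq1])
  have "(R\<^sup>T * U)\<^sup>T * (R\<^sup>T * U) = U\<^sup>T * R * (S\<^sup>T * V)"
    using transpose_mult[OF Rt U] eq2 by simp
  also have "\<dots> = U\<^sup>T * (R * S\<^sup>T * V)"
    using assoc_mult_mat[OF Ut R mult_carrier_mat[OF St V]] assoc_mult_mat[OF R St V] by simp
  also have "\<dots> = U\<^sup>T * P\<^sup>T * (Q * V)"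
    unfolding cross[symmetric] assoc_mult_mat[OF Pt Q V] by (rule assoc_mult_mat[symmetric, OF Ut Pt QV])
  also have "\<dots> = (P * U)\<^sup>T * (Q * V)"
    using transpose_mult[OF P U] by simp
  finally have "(R\<^sup>T * U)\<^sup>T * (R\<^sup>T * U) = (P * U)\<^sup>T * (Q * V)" .
  moreover have "(P * U)\<^sup>T * (P * U) = - ((P * U)\<^sup>T * (Q * V))"
    using arg_cong[OF PU_eq, of "\<lambda>Y. (P * U)\<^sup>T * Y"]
      uminus_mult_right_mat[of "(P * U)\<^sup>T" "Q * V"] carrier_matD[OF P] carrier_matD[OF Q]
    by simp
  ultimately have "(P * U)\<^sup>T * (P * U) + (R\<^sup>T * U)\<^sup>T * (R\<^sup>T * U) = 0\<^sub>m k k"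
    using PU QV by simp
  then have PU0: "P * U = 0\<^sub>m N k"
    using gram_add_eq_zero_imp_zero[OF PU RU] by blast
  have "U = LP * P * U" using LP U by simp
  also have "\<dots> = 0\<^sub>m a k"
    unfolding assoc_mult_mat[OF LP(1) P U] PU0 by (rule right_mult_zero_mat[OF LP(1)])
  finally have U0: "U = 0\<^sub>m a k" .
  have QV0: "Q * V = 0\<^sub>m N k"
    using eq1 unfolding PU0 left_add_zero_mat[OF QV] .
  have "V = LQ * Q * V" using LQ V by simp
  also have "\<dots> = 0\<^sub>m b k"
    unfolding assoc_mult_mat[OF LQ(1) Q V] QV0 by (rule right_mult_zero_mat[OF LQ(1)])
  finally show ?thesis using U0 by simp
qed

lemma gram_sum_quadratic_form:
  fixes B C X :: "real mat"
  assumes B: "B \<in> carrier_mat N K" and C: "C \<in> carrier_mat c K" and X: "X \<in> carrier_mat K k"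
  shows "X\<^sup>T * ((B\<^sup>T * B + C\<^sup>T * C) * X) = (B * X)\<^sup>T * (B * X) + (C * X)\<^sup>T * (C * X)"
proof -
  have Bt: "B\<^sup>T \<in> carrier_mat K N" and Ct: "C\<^sup>T \<in> carrier_mat K c" and Xt: "X\<^sup>T \<in> carrier_mat k K"
    using B C X by simp_all
  have "(B\<^sup>T * B + C\<^sup>T * C) * X = B\<^sup>T * B * X + C\<^sup>T * C * X"
    using B C X by (intro add_mult_distrib_mat[of _ K K]) auto
  also have "\<dots> = B\<^sup>T * (B * X) + C\<^sup>T * (C * X)"
    using assoc_mult_mat[OF Bt B X] assoc_mult_mat[OF Ct C X] by simp
  finally have "X\<^sup>T * ((B\<^sup>T * B + C\<^sup>T * C) * X) = X\<^sup>T * (B\<^sup>T * (B * X)) + X\<^sup>T * (C\<^sup>T * (C * X))"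
    by (simp add: mult_add_distrib_mat[OF Xt mult_carrier_mat[OF Bt mult_carrier_mat[OF B X]]
          mult_carrier_mat[OF Ct mult_carrier_mat[OF C X]]])
  also have "\<dots> = (B * X)\<^sup>T * (B * X) + (C * X)\<^sup>T * (C * X)"
    using assoc_mult_mat[OF Xt Bt mult_carrier_mat[OF B X]] assoc_mult_mat[OF Xt Ct mult_carrier_mat[OF C X]]
      transpose_mult[OF B X] transpose_mult[OF C X] by simp
  finally show ?thesis .
qed

lemma invertible_gram_sum:
  fixes B C :: "real mat"
  assumes B: "B \<in> carrier_mat N K" and C: "C \<in> carrier_mat c K"
    and ker: "\<And>X. X \<in> carrier_mat K 1 \<Longrightarrow> B * X = 0\<^sub>m N 1 \<Longrightarrow> C * X = 0\<^sub>m c 1 \<Longrightarrow> X = 0\<^sub>m K 1"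
  shows "invertible_mat (B\<^sup>T * B + C\<^sup>T * C)"
proof -
  define A where "A = B\<^sup>T * B + C\<^sup>T * C"
  have A: "A \<in> carrier_mat K K" unfolding A_def using B C by simp
  have "det A \<noteq> 0"
  proof
    assume "det A = 0"
    then obtain v where v: "v \<in> carrier_vec K" "v \<noteq> 0\<^sub>v K" "A *\<^sub>v v = 0\<^sub>v K"
      using det_0_iff_vec_prod_zero[OF A] by blast
    define X where "X = mat K 1 (\<lambda>(i, j). v $ i)"
    have X: "X \<in> carrier_mat K 1" unfolding X_def by simp
    have colX: "col X 0 = v" unfolding X_def using v(1) by (intro eq_vecI) auto
    have "A * X = 0\<^sub>m K 1"
    proof (rule eq_matI)
      fix i j assume "i < dim_row (0\<^sub>m K 1 :: real mat)" "j < dim_col (0\<^sub>m K 1 :: real mat)"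
      then have ij: "i < K" "j = 0" by auto
      then have "(A * X) $$ (i, j) = (A *\<^sub>v v) $ i" using A X colX by simp
      then show "(A * X) $$ (i, j) = 0\<^sub>m K 1 $$ (i, j)" using v(3) ij by simp
    qed (use A X in auto)
    then have "(B * X)\<^sup>T * (B * X) + (C * X)\<^sup>T * (C * X) = 0\<^sub>m 1 1"
      using gram_sum_quadratic_form[OF B C X] X unfolding A_def by simp
    then have "B * X = 0\<^sub>m N 1 \<and> C * X = 0\<^sub>m c 1"
      using B C X by (intro gram_add_eq_zero_imp_zero) auto
    then have "X = 0\<^sub>m K 1" using ker X by blast
    with colX v(2) show False by auto
  qed
  then obtain Ainv where "Ainv \<in> carrier_mat K K" "Ainv * A = 1\<^sub>m K" "A * Ainv = 1\<^sub>m K"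
    using det_non_zero_imp_unit[OF A, of "()"] unfolding Units_def ring_mat_def by auto
  then show ?thesis
    using A unfolding A_def[symmetric] invertible_mat_def inverts_mat_def by auto
qed

section \<open>Kronecker products and block matrices\<close>

lemma kron_dims [simp]:
  "dim_row (kron A B) = dim_row A * dim_row B"
  "dim_col (kron A B) = dim_col A * dim_col B"
  unfolding kron_def by simp_all

lemma kron_carrier_mat:
  "A \<in> carrier_mat a1 a2 \<Longrightarrow> B \<in> carrier_mat b1 b2 \<Longrightarrow> kron A B \<in> carrier_mat (a1 * b1) (a2 * b2)"
  unfolding carrier_mat_def by simp

lemma index_kron:
  "i < dim_row A * dim_row B \<Longrightarrow> j < dim_col A * dim_col B \<Longrightarrow>
   kron A B $$ (i, j) = A $$ (i div dim_row B, j div dim_col B) * B $$ (i mod dim_row B, j mod dim_col B)"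
  unfolding kron_def by simp

lemma mult_kron:
  assumes A: "A \<in> carrier_mat a1 a2" and B: "B \<in> carrier_mat b1 b2"
    and C: "C \<in> carrier_mat a2 c2" and D: "D \<in> carrier_mat b2 d2"
  shows "kron A B * kron C D = kron (A * C) (B * D)"
proof (rule eq_matI)
  fix i j assume "i < dim_row (kron (A * C) (B * D))" and "j < dim_col (kron (A * C) (B * D))"
  then have i: "i < a1 * b1" and j: "j < c2 * d2" using A B C D by simp_all
  then have "0 < b1" "0 < d2" by (auto intro: Nat.gr0I)
  then have bounds: "i div b1 < a1" "j div d2 < c2" "i mod b1 < b1" "j mod d2 < d2"
    using i j by (simp_all add: less_mult_imp_div_less)
  have "(kron A B * kron C D) $$ (i, j) = (\<Sum>k<a2 * b2. kron A B $$ (i, k) * kron C D $$ (k, j))"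
    using A B C D i j by (simp add: index_mult_mat_sum del: index_mult_mat(1))
  also have "\<dots> = (\<Sum>p<a2. \<Sum>q<b2. kron A B $$ (i, p * b2 + q) * kron C D $$ (p * b2 + q, j))"
    by (rule sum_lessThan_mult_nat)
  also have "\<dots> = (\<Sum>p<a2. \<Sum>q<b2. (A $$ (i div b1, p) * C $$ (p, j div d2))
                                    * (B $$ (i mod b1, q) * D $$ (q, j mod d2)))"
  proof (intro sum.cong refl)
    fix p q assume p: "p \<in> {..<a2}" and q: "q \<in> {..<b2}"
    have "p * b2 + q < (p + 1) * b2" using q by simp
    also have "\<dots> \<le> a2 * b2" using p by (intro mult_right_mono) auto
    finally have "p * b2 + q < a2 * b2" .
    moreover have "(p * b2 + q) div b2 = p" "(p * b2 + q) mod b2 = q" using q by auto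
    ultimately show "kron A B $$ (i, p * b2 + q) * kron C D $$ (p * b2 + q, j)
        = (A $$ (i div b1, p) * C $$ (p, j div d2)) * (B $$ (i mod b1, q) * D $$ (q, j mod d2))"
      using A B C D i j by (simp add: index_kron)
  qed
  also have "\<dots> = (A * C) $$ (i div b1, j div d2) * (B * D) $$ (i mod b1, j mod d2)"
    using A B C D bounds
    by (simp add: index_mult_mat_sum sum_product mult_ac del: index_mult_mat(1))
  also have "\<dots> = kron (A * C) (B * D) $$ (i, j)"
    using A B C D i j by (simp add: index_kron)
  finally show "(kron A B * kron C D) $$ (i, j) = kron (A * C) (B * D) $$ (i, j)" .
qed (use A B C D in simp_all)

lemma transpose_kron: "(kron A B)\<^sup>T = kron A\<^sup>T B\<^sup>T"
proof (rule eq_matI)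
  fix i j assume "i < dim_row (kron A\<^sup>T B\<^sup>T)" and "j < dim_col (kron A\<^sup>T B\<^sup>T)"
  then have i: "i < dim_col A * dim_col B" and j: "j < dim_row A * dim_row B" by simp_all
  then have "0 < dim_col B" "0 < dim_row B" by (auto intro: Nat.gr0I)
  moreover have "i div dim_col B < dim_col A" "j div dim_row B < dim_row A"
    using i j by (simp_all add: less_mult_imp_div_less)
  ultimately show "(kron A B)\<^sup>T $$ (i, j) = kron A\<^sup>T B\<^sup>T $$ (i, j)"
    using i j by (simp add: index_kron)
qed simp_all

lemma kron_one_mat: "kron (1\<^sub>m a) (1\<^sub>m b) = 1\<^sub>m (a * b)"
proof (rule eq_matI)
  fix i j assume "i < dim_row (1\<^sub>m (a * b) :: real mat)" and "j < dim_col (1\<^sub>m (a * b) :: real mat)"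
  then have i: "i < a * b" and j: "j < a * b" by simp_all
  then have "0 < b" by (auto intro: Nat.gr0I)
  moreover have "i div b < a" "j div b < a" using i j by (simp_all add: less_mult_imp_div_less)
  moreover have "(i div b = j div b \<and> i mod b = j mod b) \<longleftrightarrow> i = j" by (metis div_mult_mod_eq)
  ultimately show "kron (1\<^sub>m a) (1\<^sub>m b) $$ (i, j) = 1\<^sub>m (a * b) $$ (i, j)"
    using i j by (auto simp: index_kron)
qed simp_all

lemma kron_zero_mat_left:
  "B \<in> carrier_mat p q \<Longrightarrow> kron (0\<^sub>m r c) B = 0\<^sub>m (r * p) (c * q)"
  by (rule eq_matI) (auto simp: index_kron less_mult_imp_div_less)

lemma kron_zero_mat_right:
  assumes "A \<in> carrier_mat r c"
  shows "kron A (0\<^sub>m p q) = 0\<^sub>m (r * p) (c * q)"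
proof (rule eq_matI)
  fix i j assume "i < dim_row (0\<^sub>m (r * p) (c * q) :: real mat)"
    and "j < dim_col (0\<^sub>m (r * p) (c * q) :: real mat)"
  then have "0 < p" "0 < q" by (auto intro: Nat.gr0I)
  then show "kron A (0\<^sub>m p q) $$ (i, j) = 0\<^sub>m (r * p) (c * q) $$ (i, j)"
    using assms \<open>i < _\<close> \<open>j < _\<close> by (auto simp: index_kron)
qed (use assms in auto)

definition vcat :: "real mat \<Rightarrow> real mat \<Rightarrow> real mat" where
  "vcat A B = mat (dim_row A + dim_row B) (dim_col A)
     (\<lambda>(i, j). if i < dim_row A then A $$ (i, j) else B $$ (i - dim_row A, j))"

lemma hcat_dims [simp]:
  "dim_row (hcat A B) = dim_row A" "dim_col (hcat A B) = dim_col A + dim_col B"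
  unfolding hcat_def by simp_all

lemma vcat_dims [simp]:
  "dim_row (vcat A B) = dim_row A + dim_row B" "dim_col (vcat A B) = dim_col A"
  unfolding vcat_def by simp_all

lemma transpose_hcat: "dim_row B = dim_row A \<Longrightarrow> (hcat A B)\<^sup>T = vcat A\<^sup>T B\<^sup>T"
  by (rule eq_matI) (auto simp: hcat_def vcat_def)

lemma hcat_mult_vcat:
  assumes "dim_col A = dim_row C" "dim_col B = dim_row D" "dim_row B = dim_row A" "dim_col D = dim_col C"
  shows "hcat A B * vcat C D = A * C + B * D"
proof (rule eq_matI)
  fix i j assume "i < dim_row (A * C + B * D)" and "j < dim_col (A * C + B * D)"
  then have i: "i < dim_row A" and j: "j < dim_col C" using assms by simp_all
  have "(hcat A B * vcat C D) $$ (i, j)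
      = (\<Sum>k<dim_col A + dim_col B. hcat A B $$ (i, k) * vcat C D $$ (k, j))"
    using i j assms by (simp add: index_mult_mat_sum del: index_mult_mat(1))
  also have "\<dots> = (\<Sum>k<dim_col A. hcat A B $$ (i, k) * vcat C D $$ (k, j))
      + (\<Sum>k<dim_col B. hcat A B $$ (i, dim_col A + k) * vcat C D $$ (dim_col A + k, j))"
    by (rule sum_lessThan_add_nat)
  also have "\<dots> = (\<Sum>k<dim_col A. A $$ (i, k) * C $$ (k, j)) + (\<Sum>k<dim_col B. B $$ (i, k) * D $$ (k, j))"
    using i j assms by (simp add: hcat_def vcat_def)
  also have "\<dots> = (A * C + B * D) $$ (i, j)"
    using i j assms by (simp add: index_mult_mat_sum del: index_mult_mat(1))
  finally show "(hcat A B * vcat C D) $$ (i, j) = (A * C + B * D) $$ (i, j)" .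
qed (use assms in simp_all)

lemma mult_hcat:
  "dim_row A = dim_row B \<Longrightarrow> dim_col M = dim_row A \<Longrightarrow> M * hcat A B = hcat (M * A) (M * B)"
  by (rule eq_matI) (auto simp: index_mult_mat_sum hcat_def simp del: index_mult_mat(1))

lemma vcat_split:
  "r \<le> dim_row X \<Longrightarrow>
   X = vcat (mat r (dim_col X) (\<lambda>(i, j). X $$ (i, j))) (mat (dim_row X - r) (dim_col X) (\<lambda>(i, j). X $$ (r + i, j)))"
  by (rule eq_matI) (auto simp: vcat_def)

lemma vcat_zero_mat: "vcat (0\<^sub>m a c) (0\<^sub>m b c) = 0\<^sub>m (a + b) c"
  by (rule eq_matI) (auto simp: vcat_def)

section \<open>The one-dimensional difference matrix\<close>

lemma Bmat_carrier: "Bmat n \<in> carrier_mat n (n - 1)"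
  unfolding Bmat_def by simp

lemma index_Bmat:
  "i < n \<Longrightarrow> j < n - 1 \<Longrightarrow>
   Bmat n $$ (i, j) = real n * ((if i = j then 1 else 0) - (if i = j + 1 then 1 else 0))"
  unfolding Bmat_def by auto

definition Bmat_left_inverse :: "nat \<Rightarrow> real mat" where
  "Bmat_left_inverse n = mat (n - 1) n (\<lambda>(j, i). if i \<le> j then 1 / real n else 0)"

text \<open>Applied to f this is the discrete antiderivative j \<mapsto> h * (\<Sum>i\<le>j. f i - mean f) of the
  mean-free part of f, so Bmat n undoes it only modulo constants.\<close>
definition Bmat_antiderivative :: "nat \<Rightarrow> real mat" where
  "Bmat_antiderivative n = mat (n - 1) n (\<lambda>(j, c). ((if c \<le> j then 1 else 0) - real (j + 1) / real n) / real n)"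

definition mean_mat :: "nat \<Rightarrow> real mat" where
  "mean_mat n = mat n n (\<lambda>_. 1 / real n)"

lemma Bmat_left_inverse_carrier: "Bmat_left_inverse n \<in> carrier_mat (n - 1) n"
  unfolding Bmat_left_inverse_def by simp

lemma Bmat_antiderivative_carrier: "Bmat_antiderivative n \<in> carrier_mat (n - 1) n"
  unfolding Bmat_antiderivative_def by simp

lemma mean_mat_carrier: "mean_mat n \<in> carrier_mat n n"
  unfolding mean_mat_def by simp

lemma Bmat_left_inverse_mult_Bmat: "Bmat_left_inverse n * Bmat n = 1\<^sub>m (n - 1)"
proof (rule eq_matI)
  fix j k assume "j < dim_row (1\<^sub>m (n - 1) :: real mat)" and "k < dim_col (1\<^sub>m (n - 1) :: real mat)"
  then have j: "j < n - 1" and k: "k < n - 1" by simp_all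
  have "(Bmat_left_inverse n * Bmat n) $$ (j, k)
      = (\<Sum>i<n. Bmat_left_inverse n $$ (j, i) * Bmat n $$ (i, k))"
    using j k Bmat_left_inverse_carrier[of n] Bmat_carrier[of n]
    by (simp add: index_mult_mat_sum del: index_mult_mat(1))
  also have "\<dots> = (\<Sum>i<n. (if i = k then (if k \<le> j then 1 else 0) else 0)
                       - (if i = k + 1 then (if k + 1 \<le> j then 1 else 0) else 0))"
    using j k by (intro sum.cong refl) (auto simp: Bmat_left_inverse_def index_Bmat)
  also have "\<dots> = (if k \<le> j then 1 else 0) - (if k + 1 \<le> j then 1 else 0)"
  proof -
    have "k < n" "Suc k < n" using k by auto
    then show ?thesis by (simp add: sum_subtractf)
  qed
  also have "\<dots> = 1\<^sub>m (n - 1) $$ (j, k)" using j k by auto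
  finally show "(Bmat_left_inverse n * Bmat n) $$ (j, k) = 1\<^sub>m (n - 1) $$ (j, k)" .
qed (simp_all add: Bmat_left_inverse_def Bmat_def)

lemma constant_row_mult_Bmat: "mat 1 n (\<lambda>_. c) * Bmat n = 0\<^sub>m 1 (n - 1)"
proof (rule eq_matI)
  fix i k assume "i < dim_row (0\<^sub>m 1 (n - 1) :: real mat)" and "k < dim_col (0\<^sub>m 1 (n - 1) :: real mat)"
  then have i: "i = 0" and k: "k < n - 1" by simp_all
  have "(mat 1 n (\<lambda>_. c) * Bmat n) $$ (i, k)
      = (\<Sum>j<n. c * (real n * ((if j = k then 1 else 0) - (if j = k + 1 then 1 else 0))))"
    using i k Bmat_carrier[of n] by (simp add: index_mult_mat_sum index_Bmat del: index_mult_mat(1))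
  also have "\<dots> = 0"
    using k by (simp add: sum_subtractf sum_distrib_left[symmetric])
  finally show "(mat 1 n (\<lambda>_. c) * Bmat n) $$ (i, k) = 0\<^sub>m 1 (n - 1) $$ (i, k)" using i k by simp
qed (simp_all add: Bmat_def)

lemma Bmat_mult_antiderivative:
  assumes n: "n \<ge> 1"
  shows "Bmat n * Bmat_antiderivative n = 1\<^sub>m n - mean_mat n"
proof (rule eq_matI)
  fix i c assume "i < dim_row (1\<^sub>m n - mean_mat n)" and "c < dim_col (1\<^sub>m n - mean_mat n)"
  then have i: "i < n" and c: "c < n" by (simp_all add: mean_mat_def)
  define r where "r = (\<lambda>j. ((if c \<le> j then 1 else 0) - real (j + 1) / real n) / real n)"
  have "(Bmat n * Bmat_antiderivative n) $$ (i, c)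
      = (\<Sum>j<n - 1. Bmat n $$ (i, j) * Bmat_antiderivative n $$ (j, c))"
    using i c Bmat_antiderivative_carrier[of n] Bmat_carrier[of n]
    by (simp add: index_mult_mat_sum del: index_mult_mat(1))
  also have "\<dots> = (\<Sum>j<n - 1. (if j = i then real n * r i else 0) - (if j + 1 = i then real n * r j else 0))"
    using i c by (intro sum.cong refl) (auto simp: index_Bmat Bmat_antiderivative_def r_def)
  also have "\<dots> = (if i < n - 1 then real n * r i else 0) - (if 0 < i then real n * r (i - 1) else 0)"
  proof -
    have "(\<Sum>j<n - 1. (if j + 1 = i then real n * r j else 0)) = (if 0 < i then real n * r (i - 1) else 0)"
    proof (cases i)
      case (Suc i')
      have "(\<Sum>j<n - 1. (if j + 1 = i then real n * r j else 0)) = (\<Sum>j<n - 1. (if j = i' then real n * r j else 0))"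
        using Suc by (intro sum.cong refl) auto
      also have "\<dots> = real n * r i'" using Suc i by simp
      finally show ?thesis using Suc by simp
    qed simp
    then show ?thesis by (simp add: sum_subtractf)
  qed
  also have "\<dots> = (1\<^sub>m n - mean_mat n) $$ (i, c)"
  proof (cases "i < n - 1")
    case True
    then show ?thesis using i c n by (auto simp: mean_mat_def r_def field_simps of_nat_diff)
  next
    case False
    then have "i = n - 1" using i by simp
    then have i_last: "real i = real n - 1" using n by (simp add: of_nat_diff)
    show ?thesis using False i c n i_last by (auto simp: mean_mat_def r_def field_simps)
  qed
  finally show "(Bmat n * Bmat_antiderivative n) $$ (i, c) = (1\<^sub>m n - mean_mat n) $$ (i, c)" .
qed (simp_all add: Bmat_def Bmat_antiderivative_def mean_mat_def)

section \<open>The staggered-grid operators\<close>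

lemma Bux_carrier: "Bux n \<in> carrier_mat (n * n) (n * (n - 1))"
  unfolding Bux_def by (rule kron_carrier_mat[OF one_carrier_mat Bmat_carrier])

lemma Bvy_carrier: "Bvy n \<in> carrier_mat (n * n) ((n - 1) * n)"
  unfolding Bvy_def by (rule kron_carrier_mat[OF Bmat_carrier one_carrier_mat])

lemma Bqx_carrier: "Bqx n \<in> carrier_mat ((n - 1) * n) ((n - 1) * (n - 1))"
  unfolding Bqx_def by (rule kron_carrier_mat[OF one_carrier_mat Bmat_carrier])

lemma Bqy_carrier: "Bqy n \<in> carrier_mat (n * (n - 1)) ((n - 1) * (n - 1))"
  unfolding Bqy_def by (rule kron_carrier_mat[OF Bmat_carrier one_carrier_mat])

lemma bigB_carrier: "bigB n \<in> carrier_mat (n * n) (n * (n - 1) + (n - 1) * n)"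
  using Bux_carrier[of n] Bvy_carrier[of n] unfolding bigB_def carrier_mat_def by simp

lemma bigC_carrier: "bigC n \<in> carrier_mat ((n - 1) * (n - 1)) (n * (n - 1) + (n - 1) * n)"
  using Bqx_carrier[of n] Bqy_carrier[of n] unfolding bigC_def carrier_mat_def by simp

lemma onevec_carrier: "onevec n \<in> carrier_mat (n * n) 1"
  unfolding onevec_def by (simp add: power2_eq_square)

lemma transpose_bigC: "(bigC n)\<^sup>T = vcat (- Bqy n) (Bqx n)"
  using Bqx_carrier[of n] Bqy_carrier[of n] unfolding bigC_def
  by (subst transpose_hcat) (simp_all add: transpose_uminus)

lemma Bux_mult_Bqy: "Bux n * Bqy n = kron (Bmat n) (Bmat n)"
  unfolding Bux_def Bqy_def
  using mult_kron[OF one_carrier_mat Bmat_carrier Bmat_carrier one_carrier_mat] Bmat_carrier[of n]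
  by simp

lemma Bvy_mult_Bqx: "Bvy n * Bqx n = kron (Bmat n) (Bmat n)"
  unfolding Bvy_def Bqx_def
  using mult_kron[OF Bmat_carrier one_carrier_mat one_carrier_mat Bmat_carrier] Bmat_carrier[of n]
  by simp

lemma bigB_mult_transpose_bigC: "bigB n * (bigC n)\<^sup>T = 0\<^sub>m (n * n) ((n - 1) * (n - 1))"
proof -
  have BB: "kron (Bmat n) (Bmat n) \<in> carrier_mat (n * n) ((n - 1) * (n - 1))"
    by (rule kron_carrier_mat[OF Bmat_carrier Bmat_carrier])
  have "bigB n * (bigC n)\<^sup>T = - Bux n * - Bqy n + - Bvy n * Bqx n"
    unfolding transpose_bigC bigB_def
    using Bux_carrier[of n] Bvy_carrier[of n] Bqx_carrier[of n] Bqy_carrier[of n]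
    by (subst hcat_mult_vcat) simp_all
  also have "\<dots> = kron (Bmat n) (Bmat n) + - kron (Bmat n) (Bmat n)"
    using Bux_carrier[of n] Bvy_carrier[of n] Bqx_carrier[of n] Bqy_carrier[of n]
    by (simp add: Bux_mult_Bqy Bvy_mult_Bqx)
  also have "\<dots> = 0\<^sub>m (n * n) ((n - 1) * (n - 1))"
    using add_uminus_minus_mat[OF BB BB] BB by simp
  finally show ?thesis .
qed

lemma transpose_Bux_mult_Bvy: "(Bux n)\<^sup>T * Bvy n = Bqy n * (Bqx n)\<^sup>T"
proof -
  have Bt: "(Bmat n)\<^sup>T \<in> carrier_mat (n - 1) n" using Bmat_carrier[of n] by simp
  have "(Bux n)\<^sup>T * Bvy n = kron (1\<^sub>m n * Bmat n) ((Bmat n)\<^sup>T * 1\<^sub>m n)"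
    unfolding Bux_def Bvy_def transpose_kron transpose_one
    by (rule mult_kron[OF one_carrier_mat Bt Bmat_carrier one_carrier_mat])
  also have "\<dots> = kron (Bmat n * 1\<^sub>m (n - 1)) (1\<^sub>m (n - 1) * (Bmat n)\<^sup>T)"
    using Bt Bmat_carrier[of n] by simp
  also have "\<dots> = Bqy n * (Bqx n)\<^sup>T"
    unfolding Bqy_def Bqx_def transpose_kron transpose_one
    by (rule mult_kron[OF Bmat_carrier one_carrier_mat one_carrier_mat Bt, symmetric])
  finally show ?thesis .
qed

lemma less_square_imp_div_mod_less: "j < n * n \<Longrightarrow> j div n < n \<and> j mod n < (n::nat)"
  by (metis less_mult_imp_div_less mod_less_divisor mult_0_right not_gr0 not_less_zero)

lemma transpose_onevec_kron_left:
  "(onevec n)\<^sup>T = kron (mat 1 n (\<lambda>_. 1 / real n)) (mat 1 n (\<lambda>_. 1))"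
  by (rule eq_matI) (auto simp: onevec_def index_kron power2_eq_square dest: less_square_imp_div_mod_less)

lemma transpose_onevec_kron_right:
  "(onevec n)\<^sup>T = kron (mat 1 n (\<lambda>_. 1)) (mat 1 n (\<lambda>_. 1 / real n))"
  by (rule eq_matI) (auto simp: onevec_def index_kron power2_eq_square dest: less_square_imp_div_mod_less)

lemma transpose_onevec_mult_bigB:
  "(onevec n)\<^sup>T * bigB n = 0\<^sub>m 1 (n * (n - 1) + (n - 1) * n)"
proof -
  have "(onevec n)\<^sup>T * Bux n = kron (mat 1 n (\<lambda>_. 1 / real n) * 1\<^sub>m n) (mat 1 n (\<lambda>_. 1) * Bmat n)"
    unfolding transpose_onevec_kron_left Bux_def
    by (rule mult_kron[OF mat_carrier mat_carrier one_carrier_mat Bmat_carrier])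
  also have "\<dots> = 0\<^sub>m 1 (n * (n - 1))"
    unfolding constant_row_mult_Bmat right_mult_one_mat[OF mat_carrier]
    using kron_zero_mat_right[where p=1 and q="n - 1", OF mat_carrier] by simp
  finally have ux: "(onevec n)\<^sup>T * Bux n = 0\<^sub>m 1 (n * (n - 1))" .
  have "(onevec n)\<^sup>T * Bvy n = kron (mat 1 n (\<lambda>_. 1) * Bmat n) (mat 1 n (\<lambda>_. 1 / real n) * 1\<^sub>m n)"
    unfolding transpose_onevec_kron_right Bvy_def
    by (rule mult_kron[OF mat_carrier mat_carrier Bmat_carrier one_carrier_mat])
  also have "\<dots> = 0\<^sub>m 1 ((n - 1) * n)"
    unfolding constant_row_mult_Bmat right_mult_one_mat[OF mat_carrier]
    using kron_zero_mat_left[where r=1 and c="n - 1", OF mat_carrier] by simp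
  finally have vy: "(onevec n)\<^sup>T * Bvy n = 0\<^sub>m 1 ((n - 1) * n)" .
  have "(onevec n)\<^sup>T * bigB n = hcat (- ((onevec n)\<^sup>T * Bux n)) (- ((onevec n)\<^sup>T * Bvy n))"
    unfolding bigB_def using Bux_carrier[of n] Bvy_carrier[of n] onevec_carrier[of n]
    by (subst mult_hcat) simp_all
  also have "\<dots> = 0\<^sub>m 1 (n * (n - 1) + (n - 1) * n)"
    unfolding ux vy by (rule eq_matI) (auto simp: hcat_def)
  finally show ?thesis .
qed

lemma transpose_bigB_mult_onevec: "(bigB n)\<^sup>T * onevec n = 0\<^sub>m (n * (n - 1) + (n - 1) * n) 1"
  using transpose_mult[OF transpose_carrier_mat[THEN iffD2, OF onevec_carrier[of n]] bigB_carrier[of n]]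
    transpose_onevec_mult_bigB[of n] by simp

text \<open>The first block integrates a source along every row modulo the row means, the second
  integrates the row means across the rows modulo their mean.\<close>
definition bigB_antiderivative :: "nat \<Rightarrow> real mat" where
  "bigB_antiderivative n = vcat (- kron (1\<^sub>m n) (Bmat_antiderivative n)) (- kron (Bmat_antiderivative n) (mean_mat n))"

lemma bigB_antiderivative_carrier: "bigB_antiderivative n \<in> carrier_mat (n * (n - 1) + (n - 1) * n) (n * n)"
  unfolding bigB_antiderivative_def carrier_mat_def
  using Bmat_antiderivative_carrier[of n] mean_mat_carrier[of n] by simp

lemma bigB_mult_antiderivative:
  assumes n: "n \<ge> 1"
  shows "bigB n * bigB_antiderivative n + onevec n * (onevec n)\<^sup>T = 1\<^sub>m (n * n)"
proof -
  have R: "Bmat_antiderivative n \<in> carrier_mat (n - 1) n" by (rule Bmat_antiderivative_carrier)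
  have M: "mean_mat n \<in> carrier_mat n n" by (rule mean_mat_carrier)
  have "bigB n * bigB_antiderivative n
      = - Bux n * - kron (1\<^sub>m n) (Bmat_antiderivative n) + - Bvy n * - kron (Bmat_antiderivative n) (mean_mat n)"
    unfolding bigB_def bigB_antiderivative_def using Bux_carrier[of n] Bvy_carrier[of n] R M
    by (subst hcat_mult_vcat) simp_all
  also have "\<dots> = Bux n * kron (1\<^sub>m n) (Bmat_antiderivative n) + Bvy n * kron (Bmat_antiderivative n) (mean_mat n)"
    using Bux_carrier[of n] Bvy_carrier[of n] R M by simp
  also have "\<dots> = kron (1\<^sub>m n) (1\<^sub>m n - mean_mat n) + kron (1\<^sub>m n - mean_mat n) (mean_mat n)"
    unfolding Bux_def Bvy_def
      mult_kron[OF one_carrier_mat Bmat_carrier one_carrier_mat R]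
      mult_kron[OF Bmat_carrier one_carrier_mat R M] Bmat_mult_antiderivative[OF n]
    using M by simp
  finally have BG: "bigB n * bigB_antiderivative n
      = kron (1\<^sub>m n) (1\<^sub>m n - mean_mat n) + kron (1\<^sub>m n - mean_mat n) (mean_mat n)" .
  show ?thesis
  proof (rule eq_matI)
    fix i j assume "i < dim_row (1\<^sub>m (n * n) :: real mat)" and "j < dim_col (1\<^sub>m (n * n) :: real mat)"
    then have i: "i < n * n" and j: "j < n * n" by simp_all
    have n0: "0 < n" using n by simp
    have bounds: "i div n < n" "j div n < n" "i mod n < n" "j mod n < n"
      using i j by (simp_all add: less_square_imp_div_mod_less)
    have eq: "(i div n = j div n \<and> i mod n = j mod n) \<longleftrightarrow> i = j"
      by (metis div_mult_mod_eq)
    have "(bigB n * bigB_antiderivative n + onevec n * (onevec n)\<^sup>T) $$ (i, j)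
        = (bigB n * bigB_antiderivative n) $$ (i, j) + (onevec n * (onevec n)\<^sup>T) $$ (i, j)"
      using i j onevec_carrier[of n] by (intro index_add_mat(1)) auto
    also have "\<dots> = (if i div n = j div n then 1 else 0) * ((if i mod n = j mod n then 1 else 0) - 1 / real n)
         + ((if i div n = j div n then 1 else 0) - 1 / real n) * (1 / real n) + 1 / real n * (1 / real n)"
      unfolding BG using i j bounds M
      by (simp add: index_kron mean_mat_def onevec_def index_mult_mat_sum power2_eq_square
          del: index_mult_mat(1))
    also have "\<dots> = 1\<^sub>m (n * n) $$ (i, j)"
      using i j eq n0 by (auto simp: field_simps)
    finally show "(bigB n * bigB_antiderivative n + onevec n * (onevec n)\<^sup>T) $$ (i, j) = 1\<^sub>m (n * n) $$ (i, j)" .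
  qed (use bigB_carrier[of n] onevec_carrier[of n] in auto)
qed

lemma bigB_bigC_kernel_trivial:
  assumes X: "X \<in> carrier_mat (n * (n - 1) + (n - 1) * n) k"
    and BX: "bigB n * X = 0\<^sub>m (n * n) k" and CX: "bigC n * X = 0\<^sub>m ((n - 1) * (n - 1)) k"
  shows "X = 0\<^sub>m (n * (n - 1) + (n - 1) * n) k"
proof -
  define a where "a = n * (n - 1)"
  define U where "U = mat a k (\<lambda>(i, j). X $$ (i, j))"
  define V where "V = mat (dim_row X - a) k (\<lambda>(i, j). X $$ (a + i, j))"
  have U: "U \<in> carrier_mat (n * (n - 1)) k" unfolding U_def a_def by simp
  have V: "V \<in> carrier_mat ((n - 1) * n) k" unfolding V_def a_def using X by simp
  have X_eq: "X = vcat U V" unfolding U_def V_def using vcat_split[of a X] X a_def by simp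
  have ux: "- Bux n \<in> carrier_mat (n * n) (n * (n - 1))" using Bux_carrier[of n] by simp
  have vy: "- Bvy n \<in> carrier_mat (n * n) ((n - 1) * n)" using Bvy_carrier[of n] by simp
  have Lx: "kron (1\<^sub>m n) (Bmat_left_inverse n) \<in> carrier_mat (n * (n - 1)) (n * n)"
    using kron_carrier_mat[OF one_carrier_mat Bmat_left_inverse_carrier, of n n] by simp
  have Ly: "kron (Bmat_left_inverse n) (1\<^sub>m n) \<in> carrier_mat ((n - 1) * n) (n * n)"
    using kron_carrier_mat[OF Bmat_left_inverse_carrier one_carrier_mat, of n n] by simp
  have "kron (1\<^sub>m n) (Bmat_left_inverse n) * Bux n = 1\<^sub>m (n * (n - 1))"
    unfolding Bux_def mult_kron[OF one_carrier_mat Bmat_left_inverse_carrier one_carrier_mat Bmat_carrier]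
    by (simp add: Bmat_left_inverse_mult_Bmat kron_one_mat)
  then have "- kron (1\<^sub>m n) (Bmat_left_inverse n) * - Bux n = 1\<^sub>m (n * (n - 1))"
    using uminus_mult_uminus_mat[OF Lx Bux_carrier] by simp
  moreover have "kron (Bmat_left_inverse n) (1\<^sub>m n) * Bvy n = 1\<^sub>m ((n - 1) * n)"
    unfolding Bvy_def mult_kron[OF Bmat_left_inverse_carrier one_carrier_mat Bmat_carrier one_carrier_mat]
    by (simp add: Bmat_left_inverse_mult_Bmat kron_one_mat)
  then have "- kron (Bmat_left_inverse n) (1\<^sub>m n) * - Bvy n = 1\<^sub>m ((n - 1) * n)"
    using uminus_mult_uminus_mat[OF Ly Bvy_carrier] by simp
  moreover have "(- Bux n)\<^sup>T * - Bvy n = Bqy n * (Bqx n)\<^sup>T"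
    using transpose_Bux_mult_Bvy[of n] Bux_carrier[of n] Bvy_carrier[of n]
    by (simp add: transpose_uminus)
  moreover have "- Bux n * U + - Bvy n * V = 0\<^sub>m (n * n) k"
    using BX unfolding X_eq bigB_def using ux vy U V by (subst (asm) hcat_mult_vcat) auto
  moreover have "(Bqy n)\<^sup>T * U = (Bqx n)\<^sup>T * V"
  proof -
    have qy: "(Bqy n)\<^sup>T * U \<in> carrier_mat ((n - 1) * (n - 1)) k"
      and qx: "(Bqx n)\<^sup>T * V \<in> carrier_mat ((n - 1) * (n - 1)) k"
      using Bqy_carrier[of n] Bqx_carrier[of n] U V by auto
    have "- ((Bqy n)\<^sup>T * U) + (Bqx n)\<^sup>T * V = 0\<^sub>m ((n - 1) * (n - 1)) k"
      using CX unfolding X_eq bigC_def using Bqy_carrier[of n] Bqx_carrier[of n] U V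
      by (subst (asm) hcat_mult_vcat) auto
    then show ?thesis
      using add_eq_zero_imp_eq_uminus_mat[OF uminus_carrier_mat[OF qy] qx] by simp
  qed
  ultimately have "U = 0\<^sub>m (n * (n - 1)) k \<and> V = 0\<^sub>m ((n - 1) * n) k"
    using block_kernel_trivial[OF ux vy Bqy_carrier Bqx_carrier uminus_carrier_mat[OF Lx] _
        uminus_carrier_mat[OF Ly] _ _ U V] by blast
  then show ?thesis unfolding X_eq by (simp add: vcat_zero_mat)
qed

lemma AN_carrier: "AN n \<in> carrier_mat (n * (n - 1) + (n - 1) * n) (n * (n - 1) + (n - 1) * n)"
  unfolding AN_def using bigB_carrier[of n] bigC_carrier[of n] by simp

lemma AN_invertible: "invertible_mat (AN n)"
  unfolding AN_def
  by (rule invertible_gram_sum[OF bigB_carrier bigC_carrier bigB_bigC_kernel_trivial])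

theorem corollary2:
  fixes n :: nat
  assumes "n \<ge> 2"
  shows "invertible_mat (AN n) \<and>
    (\<forall>Ainv. inverts_mat (AN n) Ainv \<and> inverts_mat Ainv (AN n) \<longrightarrow>
       bigB n * Ainv * (bigB n)\<^sup>T = 1\<^sub>m (n^2) - onevec n * (onevec n)\<^sup>T \<and>
       (\<forall>X. is_pinv (bigB n) X \<longrightarrow> bigB n * Ainv * (bigB n)\<^sup>T = bigB n * X))"
proof -
  have split: "bigB n * bigB_antiderivative n + onevec n * (onevec n)\<^sup>T = 1\<^sub>m (n * n)"
    using assms by (intro bigB_mult_antiderivative) simp
  have "bigB n * Ainv * (bigB n)\<^sup>T = 1\<^sub>m (n * n) - onevec n * (onevec n)\<^sup>T \<and>
        (\<forall>X. is_pinv (bigB n) X \<longrightarrow> bigB n * X = 1\<^sub>m (n * n) - onevec n * (onevec n)\<^sup>T)"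
    if inverse: "inverts_mat (AN n) Ainv" "inverts_mat Ainv (AN n)" for Ainv
  proof (intro conjI allI impI)
    obtain Ainv_carrier: "Ainv \<in> carrier_mat (n * (n - 1) + (n - 1) * n) (n * (n - 1) + (n - 1) * n)"
      and inv: "Ainv * ((bigB n)\<^sup>T * bigB n + (bigC n)\<^sup>T * bigC n) = 1\<^sub>m (n * (n - 1) + (n - 1) * n)"
      using inverts_mat_carrier[OF AN_carrier inverse] unfolding AN_def by blast
    show "bigB n * Ainv * (bigB n)\<^sup>T = 1\<^sub>m (n * n) - onevec n * (onevec n)\<^sup>T"
      by (rule schur_complement_eq_projector[OF bigB_carrier bigC_carrier bigB_antiderivative_carrier
            onevec_carrier Ainv_carrier inv bigB_mult_transpose_bigC split transpose_bigB_mult_onevec])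
    show "bigB n * X = 1\<^sub>m (n * n) - onevec n * (onevec n)\<^sup>T" if "is_pinv (bigB n) X" for X
      by (rule pinv_eq_projector[OF bigB_carrier bigB_antiderivative_carrier onevec_carrier that split
            transpose_bigB_mult_onevec])
  qed
  then show ?thesis
    using AN_invertible by (auto simp: power2_eq_square)
qed

end
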